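(* Let $w>2$ and let $\tilde f\in\mathbb L_w$. Write $\tilde f=\tilde f_x x+\tilde f_y y$ with $\tilde f_x,\tilde f_y\in\mathbb A$ homogeneous of degree $w-1$, and put $g=\tilde f_y+\tilde f_x$. Then $g$ is anti-palindromic, i.e. $g=(-1)^{w-1}\mathrm{anti}(g)$, if and only if the mould $M=\mathrm{ma}_{\tilde f}$ satisfies the senary relation $$\mathrm{teru}(M)^r=\bigl(\mathrm{push}\circ\mathrm{mantar}\circ\mathrm{teru}\circ\mathrm{mantar}\bigr)(M)^r$$ for all $1\leqslant r\leqslant w$.
   Context: $\mathbb A=\mathbb Q\langle x,y\rangle$ is the free associative algebra on $x,y$ graded by total degree, and $\mathbb L_w\subset\mathbb A$ is the space of homogeneous Lie polynomials of degree $w$ in $x,y$. $\mathrm{anti}:\mathbb A\to\mathbb A$ is the linear map reversing each word: $\mathrm{anti}(a_1a_2\cdots a_n)=a_n\cdots a_2a_1$ for letters $a_i\in\{x,y\}$. Moulds. A mould is a sequence $M=(M^m)_{m\geqslant 0}$ with $M^0\in\mathbb Q$ and $M^m=M^m(x_1,\dots,x_m)\in\mathbb Q[x_1,\dots,x_m]$; $M^m(u_1,\dots,u_m)$ denotes substitution $x_i\mapsto u_i$. For $m\geqslant1$: $\mathrm{teru}(M)^1=M^1$, and for $m\geqslant2$, $\mathrm{teru}(M)^m(u_1,\dots,u_m)=M^m(u_1,\dots,u_m)+\frac{1}{u_m}\{M^{m-1}(u_1,\dots,u_{m-2},u_{m-1}+u_m)-M^{m-1}(u_1,\dots,u_{m-2},u_{m-1})\}$;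 $\mathrm{mantar}(M)^m(u_1,\dots,u_m)=(-1)^{m-1}M^m(u_m,\dots,u_1)$; $\mathrm{push}(M)^m(u_1,\dots,u_m)=M^m(-u_1-\cdots-u_m,u_1,\dots,u_{m-1})$ (in depth $0$: $\mathrm{teru}(M)^0=\mathrm{push}(M)^0=M^0$, $\mathrm{mantar}(M)^0=-M^0$). The mould $\mathrm{ma}_h$: for $h\in\mathbb A$ homogeneous of degree $w$, write $h=\sum_{r=0}^w\sum a_{e_0,\dots,e_r}x^{e_0}yx^{e_1}y\cdots yx^{e_r}$ (sum over $(e_0,\dots,e_r)\in\mathbb Z_{\geqslant0}^{r+1}$, $\sum e_i=w-r$). Set $\mathrm{ma}_h^0=0$, $\mathrm{ma}_h^r=0$ for $r>w$, and for $1\le r\le w$, $\mathrm{ma}_h^r(u_1,\dots,u_r)=\sum a_{e_0,\dots,e_r}z_0^{e_0}\cdots z_r^{e_r}$ evaluated at $z_0=0$, $z_j=u_1+\cdots+u_j$ (with $0^0=1$). *)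

theory Defs
  imports Complex_Main "HOL-Library.Poly_Mapping"
begin

datatype letter = X | Y

text \<open>Elements of A are coefficient functions on words (lists of letters).
  All elements considered are homogeneous, hence finitely supported.\<close>
type_synonym alg = "letter list \<Rightarrow> rat"

definition amul :: "alg \<Rightarrow> alg \<Rightarrow> alg" where
  "amul p q = (\<lambda>u. \<Sum>i\<le>length u. p (take i u) * q (drop i u))"

definition lt :: "letter \<Rightarrow> alg" where
  "lt a = (\<lambda>u. if u = [a] then 1 else 0)"

definition bracket :: "alg \<Rightarrow> alg \<Rightarrow> alg" where
  "bracket p q = (\<lambda>u. amul p q u - amul q p u)"

definition homog :: "nat \<Rightarrow> alg \<Rightarrow> bool" where
  "homog w p \<longleftrightarrow> (\<forall>u. length u \<noteq> w \<longrightarrow> p u = 0)"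

inductive_set lie_polys :: "alg set" where
  gen: "lt a \<in> lie_polys"
| add: "p \<in> lie_polys \<Longrightarrow> q \<in> lie_polys \<Longrightarrow> (\<lambda>u. p u + q u) \<in> lie_polys"
| smult: "p \<in> lie_polys \<Longrightarrow> (\<lambda>u. c * p u) \<in> lie_polys"
| brk: "p \<in> lie_polys \<Longrightarrow> q \<in> lie_polys \<Longrightarrow> bracket p q \<in> lie_polys"

definition L :: "nat \<Rightarrow> alg set" where
  "L w = {p \<in> lie_polys. homog w p}"

definition anti :: "alg \<Rightarrow> alg" where
  "anti p = (\<lambda>u. p (rev u))"

type_synonym mpoly = "(nat \<Rightarrow>\<^sub>0 nat) \<Rightarrow>\<^sub>0 rat"

definition Var :: "nat \<Rightarrow> mpoly" where
  "Var i = Poly_Mapping.single (Poly_Mapping.single i 1) 1"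

definition Const :: "rat \<Rightarrow> mpoly" where
  "Const c = Poly_Mapping.single 0 c"

definition subst :: "(nat \<Rightarrow> mpoly) \<Rightarrow> mpoly \<Rightarrow> mpoly" where
  "subst \<sigma> p = (\<Sum>k\<in>Poly_Mapping.keys p.
      Const (Poly_Mapping.lookup p k) * (\<Prod>i\<in>Poly_Mapping.keys k. \<sigma> i ^ Poly_Mapping.lookup k i))"

text \<open>Exact division by the variable x_m (used only where the dividend is divisible).\<close>
definition div_var :: "nat \<Rightarrow> mpoly \<Rightarrow> mpoly" where
  "div_var m p = (THE q. p = Var m * q)"

text \<open>A mould: depth m component is a polynomial in x_1..x_m (depth 0: a constant).\<close>
type_synonym mould = "nat \<Rightarrow> mpoly"

definition teru :: "mould \<Rightarrow> mould" where
  "teru M m = (if m \<le> 1 then M m else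
     M m + div_var m (subst (\<lambda>i. if i = m - 1 then Var (m - 1) + Var m else Var i) (M (m - 1))
                      - M (m - 1)))"

definition mantar :: "mould \<Rightarrow> mould" where
  "mantar M m = (if m = 0 then - M 0 else
     (-1) ^ (m - 1) * subst (\<lambda>i. Var (m + 1 - i)) (M m))"

definition push :: "mould \<Rightarrow> mould" where
  "push M m = (if m = 0 then M 0 else
     subst (\<lambda>i. if i = 1 then - (\<Sum>j=1..m. Var j) else Var (i - 1)) (M m))"

text \<open>The word x^{e_0} y x^{e_1} y ... y x^{e_r} for the exponent list [e_0,...,e_r].\<close>
fun wd :: "nat list \<Rightarrow> letter list" where
  "wd [] = []"
| "wd [e] = replicate e X"
| "wd (e # es) = replicate e X @ [Y] @ wd es"

text \<open>ma_h for h homogeneous of degree w; z_j = u_1 + ... + u_j (z_0 = 0, 0^0 = 1).\<close>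
definition ma :: "nat \<Rightarrow> alg \<Rightarrow> mould" where
  "ma w h r = (if r = 0 \<or> r > w then 0 else
     (\<Sum>e\<in>{e. length e = r + 1 \<and> sum_list e = w - r}.
        Const (h (wd e)) * (\<Prod>j\<le>r. (\<Sum>i=1..j. Var i) ^ (e ! j))))"

end

theory Submission
  imports Defs
begin

(* Write ma_h^r as the depth-r part of h evaluated at the partial sums z_j = u_1 + ... + u_j,
   i.e. the sum of h(u) times z_0^e_0 ... z_r^e_r over the words u = x^e_0 y ... y x^e_r.
   A Lie polynomial of degree at least 2 does not change when all z_j are shifted by a common
   amount, and it changes by the sign (-1)^(w+1) under reversal of words. Shifting by z_r
   removes the part f_x x of f, which carries the factor z_r; hence teru(M)^r is the
   depth-(r-1) part of g evaluated at the points z_j - z_r. Reversal symmetry gives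
   mantar(M) = M, and push(mantar(teru M))^r turns out to be the same evaluation of
   (-1)^(w-1) anti(g). So the senary relation says that every depth part of
   g - (-1)^(w-1) anti(g) vanishes at the points z_j - z_r (j < r); since these are
   algebraically independent, all coefficients vanish. *)

section \<open>Substitution is a ring homomorphism\<close>

definition subst_monomial :: "(nat \<Rightarrow> mpoly) \<Rightarrow> (nat \<Rightarrow>\<^sub>0 nat) \<Rightarrow> mpoly" where
  "subst_monomial \<sigma> k = (\<Prod>i\<in>Poly_Mapping.keys k. \<sigma> i ^ Poly_Mapping.lookup k i)"

lemma subst_eq_sum_monomials:
  "subst \<sigma> p = (\<Sum>k\<in>Poly_Mapping.keys p. Const (Poly_Mapping.lookup p k) * subst_monomial \<sigma> k)"
  by (simp add: subst_def subst_monomial_def)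

lemma subst_monomial_superset:
  assumes "finite A" "Poly_Mapping.keys k \<subseteq> A"
  shows "subst_monomial \<sigma> k = (\<Prod>i\<in>A. \<sigma> i ^ Poly_Mapping.lookup k i)"
  unfolding subst_monomial_def
  by (rule prod.mono_neutral_left) (use assms in \<open>auto simp: in_keys_iff\<close>)

lemma subst_monomial_add: "subst_monomial \<sigma> (k + l) = subst_monomial \<sigma> k * subst_monomial \<sigma> l"
proof -
  let ?A = "Poly_Mapping.keys k \<union> Poly_Mapping.keys l"
  have "subst_monomial \<sigma> (k + l) = (\<Prod>i\<in>?A. \<sigma> i ^ Poly_Mapping.lookup (k + l) i)"
    by (rule subst_monomial_superset) (auto simp: in_keys_iff lookup_add)
  also have "\<dots> = (\<Prod>i\<in>?A. \<sigma> i ^ Poly_Mapping.lookup k i * \<sigma> i ^ Poly_Mapping.lookup l i)"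
    by (simp add: lookup_add power_add)
  also have "\<dots> = subst_monomial \<sigma> k * subst_monomial \<sigma> l"
    by (simp add: prod.distrib subst_monomial_superset[of ?A])
  finally show ?thesis .
qed

lemma Const_add: "Const (a + b) = Const a + Const b"
  by (simp add: Const_def single_add)

lemma Const_diff: "Const (a - b) = Const a - Const b"
  by (simp add: Const_def single_diff)

lemma Const_mult: "Const (a * b) = Const a * Const b"
  by (simp add: Const_def mult_single)

lemma Const_0 [simp]: "Const 0 = 0"
  by (simp add: Const_def)

lemma Const_1 [simp]: "Const 1 = 1"
  by (simp add: Const_def)

lemma Const_sum: "Const (sum f A) = (\<Sum>a\<in>A. Const (f a))"
  by (induction A rule: infinite_finite_induct) (simp_all add: Const_add)

lemma Const_neg1_power: "Const ((-1) ^ k) = (-1) ^ k"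
  by (induction k) (simp_all add: Const_mult Const_def single_uminus)

lemma subst_add: "subst \<sigma> (p + q) = subst \<sigma> p + subst \<sigma> q"
  unfolding subst_eq_sum_monomials
  by (rule setsum_keys_plus_distrib) (auto simp: Const_add distrib_right)

lemma subst_0 [simp]: "subst \<sigma> 0 = 0"
  by (simp add: subst_eq_sum_monomials)

lemma subst_single: "subst \<sigma> (Poly_Mapping.single k c) = Const c * subst_monomial \<sigma> k"
  by (cases "c = 0") (simp_all add: subst_eq_sum_monomials)

lemma update_eq_add_single:
  assumes "a \<notin> Poly_Mapping.keys f"
  shows "Poly_Mapping.update a b f = f + Poly_Mapping.single a b"
  using assms
  by (intro poly_mapping_eqI) (auto simp: lookup_update lookup_add lookup_single in_keys_iff when_def)

lemma subst_mult: "subst \<sigma> (p * q) = subst \<sigma> p * subst \<sigma> q"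
proof -
  have single: "subst \<sigma> (Poly_Mapping.single k c * q) = Const c * subst_monomial \<sigma> k * subst \<sigma> q" for k c
  proof (induction q rule: update_induct)
    case (update f a b)
    then show ?case
      by (simp add: update_eq_add_single distrib_left subst_add subst_single mult_single
          subst_monomial_add Const_mult algebra_simps)
  qed simp
  show ?thesis
  proof (induction p rule: update_induct)
    case (update f a b)
    then show ?case
      by (simp add: update_eq_add_single distrib_right subst_add single subst_single)
  qed simp
qed

lemma subst_uminus: "subst \<sigma> (- p) = - subst \<sigma> p"
  using subst_add[of \<sigma> p "- p"] by (simp add: eq_neg_iff_add_eq_0 add.commute)

lemma subst_diff: "subst \<sigma> (p - q) = subst \<sigma> p - subst \<sigma> q"
  using subst_add[of \<sigma> p "- q"] by (simp add: subst_uminus)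

lemma subst_Const [simp]: "subst \<sigma> (Const c) = Const c"
  by (simp add: Const_def subst_single subst_monomial_def)

lemma subst_1 [simp]: "subst \<sigma> 1 = 1"
  using subst_Const[of \<sigma> 1] by simp

lemma subst_Var [simp]: "subst \<sigma> (Var i) = \<sigma> i"
  by (simp add: Var_def subst_single subst_monomial_def)

lemma subst_sum: "subst \<sigma> (sum f A) = (\<Sum>a\<in>A. subst \<sigma> (f a))"
  by (induction A rule: infinite_finite_induct) (simp_all add: subst_add)

lemma subst_neg1_power: "subst \<sigma> ((-1) ^ n) = (-1) ^ n"
  using subst_Const[of \<sigma> "(-1) ^ n"] by (simp add: Const_neg1_power)

lemma div_var_Var_mult: "div_var m (Var m * q) = q"
proof -
  have "Var m \<noteq> 0"
    by (metis Var_def lookup_single_eq lookup_zero one_neq_zero)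
  then show ?thesis
    unfolding div_var_def by (intro the_equality) auto
qed

section \<open>Evaluating a homogeneous element depth by depth\<close>

lemma UNIV_letter: "UNIV = {X, Y}"
  using letter.exhaust by auto

instance letter :: finite
  by standard (simp add: UNIV_letter)

lemma finite_words [simp]: "finite {u :: letter list. length u = n}"
  using finite_lists_length_eq[of "UNIV :: letter set" n] by simp

fun word_monom :: "letter list \<Rightarrow> (nat \<Rightarrow> mpoly) \<Rightarrow> mpoly" where
  "word_monom [] z = 1"
| "word_monom (X # u) z = z 0 * word_monom u z"
| "word_monom (Y # u) z = word_monom u (\<lambda>j. z (Suc j))"

definition depth_poly :: "nat \<Rightarrow> alg \<Rightarrow> nat \<Rightarrow> (nat \<Rightarrow> mpoly) \<Rightarrow> mpoly" where
  "depth_poly n p r z =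
     (\<Sum>u | length u = n. if count_list u Y = r then Const (p u) * word_monom u z else 0)"

lemma word_monom_append:
  "word_monom (u @ v) z = word_monom u z * word_monom v (\<lambda>j. z (j + count_list u Y))"
proof (induction u arbitrary: z)
  case (Cons a u)
  then show ?case
    by (cases a) (simp_all add: mult.assoc)
qed simp

lemma word_monom_cong:
  "(\<And>j. j \<le> count_list u Y \<Longrightarrow> z j = z' j) \<Longrightarrow> word_monom u z = word_monom u z'"
proof (induction u arbitrary: z z')
  case (Cons a u)
  show ?case
  proof (cases a)
    case X
    then have "z 0 = z' 0" "word_monom u z = word_monom u z'"
      using Cons.prems by (auto intro: Cons.IH)
    with X show ?thesis
      by simp
  next
    case Y
    then have "word_monom u (\<lambda>j. z (Suc j)) = word_monom u (\<lambda>j. z' (Suc j))"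
      using Cons.prems by (intro Cons.IH) simp
    with Y show ?thesis
      by simp
  qed
qed simp

lemma word_monom_subst: "subst \<sigma> (word_monom u z) = word_monom u (\<lambda>j. subst \<sigma> (z j))"
  by (induction u z rule: word_monom.induct) (simp_all add: subst_mult)

lemma word_monom_rev: "word_monom (rev u) z = word_monom u (\<lambda>j. z (count_list u Y - j))"
proof (induction u arbitrary: z)
  case (Cons a u)
  then show ?case
    by (cases a) (simp_all add: word_monom_append mult.commute)
qed simp

lemma word_monom_scale:
  "word_monom u (\<lambda>j. c * z j) = c ^ (length u - count_list u Y) * word_monom u z"
proof (induction u arbitrary: z)
  case (Cons a u)
  have "count_list u Y \<le> length u"
    by (rule count_le_length)
  with Cons show ?case
    by (cases a) (simp_all add: Suc_diff_le algebra_simps)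
qed simp

lemma word_monom_replicate_X: "word_monom (replicate n X) z = z 0 ^ n"
  by (induction n) simp_all

lemma sum_words_rev: "(\<Sum>u | length u = n. F (rev u)) = (\<Sum>u | length u = n. F u)"
  by (rule sum.reindex_bij_witness[where i=rev and j=rev]) auto

lemma sum_words_snoc:
  "(\<Sum>u | length u = Suc m. F u) = (\<Sum>v | length v = m. F (v @ [X]) + F (v @ [Y]))"
proof -
  have "(\<Sum>u | length u = Suc m. F u) = (\<Sum>(v, a)\<in>{v. length v = m} \<times> UNIV. F (v @ [a]))"
    by (rule sum.reindex_bij_witness[where i="\<lambda>(v, a). v @ [a]" and j="\<lambda>u. (butlast u, last u)"])
      (auto, (metis append_butlast_last_id list.size(3) nat.distinct(1))+)
  also have "\<dots> = (\<Sum>v | length v = m. \<Sum>a\<in>UNIV. F (v @ [a]))"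
    by (simp add: sum.cartesian_product)
  also have "\<dots> = (\<Sum>v | length v = m. F (v @ [X]) + F (v @ [Y]))"
    by (simp add: UNIV_letter)
  finally show ?thesis .
qed

lemma sum_words_split:
  assumes "i \<le> n"
  shows "(\<Sum>u | length u = n. F (take i u) (drop i u))
    = (\<Sum>u | length u = i. \<Sum>v | length v = n - i. F u v)"
proof -
  have "(\<Sum>u | length u = n. F (take i u) (drop i u))
      = (\<Sum>(u, v)\<in>{u. length u = i} \<times> {v. length v = n - i}. F u v)"
    by (rule sum.reindex_bij_witness[where i="\<lambda>(u, v). u @ v" and j="\<lambda>u. (take i u, drop i u)"])
      (use assms in auto)
  then show ?thesis
    by (simp add: sum.cartesian_product)
qed

lemma depth_poly_0_coeffs [simp]: "depth_poly n (\<lambda>u. 0) r z = 0"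
  unfolding depth_poly_def by (simp only: Const_0 mult_zero_left if_cancel sum.neutral_const)

lemma depth_poly_add: "depth_poly n (\<lambda>u. p u + q u) r z = depth_poly n p r z + depth_poly n q r z"
  unfolding depth_poly_def sum.distrib[symmetric]
  by (intro sum.cong) (auto simp: Const_add distrib_right)

lemma depth_poly_diff: "depth_poly n (\<lambda>u. p u - q u) r z = depth_poly n p r z - depth_poly n q r z"
  unfolding depth_poly_def sum_subtractf[symmetric]
  by (intro sum.cong) (auto simp: Const_diff left_diff_distrib)

lemma depth_poly_smult: "depth_poly n (\<lambda>u. c * p u) r z = Const c * depth_poly n p r z"
  unfolding depth_poly_def sum_distrib_left
  by (intro sum.cong) (auto simp: Const_mult mult.assoc)

lemma depth_poly_cong_coeffs:
  "(\<And>u. length u = n \<Longrightarrow> p u = q u) \<Longrightarrow> depth_poly n p r z = depth_poly n q r z"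
  unfolding depth_poly_def by (intro sum.cong) auto

lemma depth_poly_cong:
  "(\<And>j. j \<le> r \<Longrightarrow> z j = z' j) \<Longrightarrow> depth_poly n p r z = depth_poly n p r z'"
  unfolding depth_poly_def by (intro sum.cong refl) (auto intro!: word_monom_cong)

lemma depth_poly_subst:
  "subst \<sigma> (depth_poly n p r z) = depth_poly n p r (\<lambda>j. subst \<sigma> (z j))"
  by (simp add: depth_poly_def subst_sum subst_mult word_monom_subst if_distrib cong: if_cong)

lemma depth_poly_reflect:
  "depth_poly n p r (\<lambda>j. z (r - j)) = depth_poly n (\<lambda>u. p (rev u)) r z"
proof -
  have "depth_poly n p r (\<lambda>j. z (r - j))
      = (\<Sum>u | length u = n. if count_list (rev u) Y = r
           then Const (p (rev (rev u))) * word_monom (rev u) z else 0)"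
    unfolding depth_poly_def by (intro sum.cong refl) (auto simp: word_monom_rev)
  also have "\<dots> = depth_poly n (\<lambda>u. p (rev u)) r z"
    unfolding depth_poly_def
    by (rule sum_words_rev[where F="\<lambda>u. if count_list u Y = r then Const (p (rev u)) * word_monom u z else 0"])
  finally show ?thesis .
qed

lemma depth_poly_scale: "depth_poly n p r (\<lambda>j. c * z j) = c ^ (n - r) * depth_poly n p r z"
  unfolding depth_poly_def sum_distrib_left
  by (intro sum.cong refl) (auto simp: word_monom_scale)

lemma depth_poly_snoc:
  "depth_poly (Suc m) p r z = depth_poly m (\<lambda>v. p (v @ [X])) r z * z r
     + (if r = 0 then 0 else depth_poly m (\<lambda>v. p (v @ [Y])) (r - 1) z)"
proof -
  have "depth_poly (Suc m) p r z
      = (\<Sum>v | length v = m. (if count_list v Y = r then Const (p (v @ [X])) * word_monom v z else 0) * z r)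
      + (\<Sum>v | length v = m. if Suc (count_list v Y) = r then Const (p (v @ [Y])) * word_monom v z else 0)"
    unfolding depth_poly_def sum_words_snoc sum.distrib[symmetric]
    by (intro sum.cong refl) (auto simp: word_monom_append mult.assoc)
  moreover have "(\<Sum>v | length v = m. if Suc (count_list v Y) = r
        then Const (p (v @ [Y])) * word_monom v z else 0)
      = (if r = 0 then 0 else depth_poly m (\<lambda>v. p (v @ [Y])) (r - 1) z)"
    unfolding depth_poly_def by (cases r) simp_all
  ultimately show ?thesis
    by (simp add: depth_poly_def sum_distrib_right)
qed

lemma depth_poly_depth_0: "depth_poly n p 0 z = Const (p (replicate n X)) * z 0 ^ n"
proof -
  have "count_list u Y = 0 \<longleftrightarrow> u = replicate (length u) X" for u
  proof (induction u)
    case (Cons a u)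
    then show ?case
      by (cases a) simp_all
  qed simp
  then have "depth_poly n p 0 z
      = (\<Sum>u | length u = n. if u = replicate n X then Const (p u) * word_monom u z else 0)"
    unfolding depth_poly_def by (intro sum.cong refl) auto
  also have "\<dots> = Const (p (replicate n X)) * z 0 ^ n"
    by (subst sum.delta) (simp_all add: word_monom_replicate_X)
  finally show ?thesis .
qed

lemma depth_poly_mult_shifted:
  "depth_poly i p s z * depth_poly m q t (\<lambda>j. z (j + s))
    = (\<Sum>u | length u = i. \<Sum>v | length v = m. if count_list u Y = s \<and> count_list v Y = t
         then Const (p u * q v) * word_monom (u @ v) z else 0)"
  unfolding depth_poly_def sum_product
  by (intro sum.cong refl) (auto simp: word_monom_append Const_mult algebra_simps)

lemma depth_poly_amul:
  "depth_poly n (amul p q) r z =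
     (\<Sum>i\<le>n. \<Sum>s\<le>r. depth_poly i p s z * depth_poly (n - i) q (r - s) (\<lambda>j. z (j + s)))"
proof -
  define H where "H u v s = (if count_list u Y = s \<and> count_list v Y = r - s
      then Const (p u * q v) * word_monom (u @ v) z else 0)" for u v s
  define G where "G u v = (if count_list u Y + count_list v Y = r
      then Const (p u * q v) * word_monom (u @ v) z else 0)" for u v
  have G_eq: "G u v = (\<Sum>s\<le>r. H u v s)" for u v
  proof -
    have "(\<Sum>s\<le>r. H u v s) = (\<Sum>s\<le>r. if count_list u Y = s then (if count_list v Y = r - s
        then Const (p u * q v) * word_monom (u @ v) z else 0) else 0)"
      unfolding H_def by (intro sum.cong) auto
    then show ?thesis
      unfolding G_def by auto
  qed
  have "depth_poly n (amul p q) r z = (\<Sum>u | length u = n. \<Sum>i\<le>n. G (take i u) (drop i u))"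
    unfolding depth_poly_def
  proof (intro sum.cong refl)
    fix u :: "letter list"
    assume "u \<in> {u. length u = n}"
    moreover have "count_list u Y = count_list (take i u) Y + count_list (drop i u) Y" for i
      by (metis append_take_drop_id count_list_append)
    ultimately show "(if count_list u Y = r then Const (amul p q u) * word_monom u z else 0)
        = (\<Sum>i\<le>n. G (take i u) (drop i u))"
      unfolding G_def amul_def Const_sum sum_distrib_right by auto
  qed
  also have "\<dots> = (\<Sum>i\<le>n. \<Sum>u | length u = i. \<Sum>v | length v = n - i. \<Sum>s\<le>r. H u v s)"
    unfolding G_eq by (subst sum.swap) (intro sum.cong refl sum_words_split, simp)
  also have "\<dots> = (\<Sum>i\<le>n. \<Sum>s\<le>r. \<Sum>u | length u = i. \<Sum>v | length v = n - i. H u v s)"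
    by (simp only: sum.swap[where B="{..r}"])
  also have "\<dots> = (\<Sum>i\<le>n. \<Sum>s\<le>r. depth_poly i p s z * depth_poly (n - i) q (r - s) (\<lambda>j. z (j + s)))"
    by (simp add: depth_poly_mult_shifted H_def)
  finally show ?thesis .
qed

fun x_runs :: "letter list \<Rightarrow> nat list" where
  "x_runs [] = [0]"
| "x_runs (X # u) = (case x_runs u of [] \<Rightarrow> [] | e # es \<Rightarrow> Suc e # es)"
| "x_runs (Y # u) = 0 # x_runs u"

lemma x_runs_not_Nil: "x_runs u \<noteq> []"
proof (induction u)
  case (Cons a u)
  then show ?case
    by (cases a) (auto split: list.split)
qed simp

lemma length_x_runs: "length (x_runs u) = Suc (count_list u Y)"
proof (induction u)
  case (Cons a u)
  then show ?case
    using x_runs_not_Nil[of u] by (cases a) (auto split: list.split)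
qed simp

lemma sum_list_x_runs: "sum_list (x_runs u) = length u - count_list u Y"
proof (induction u)
  case (Cons a u)
  moreover have "count_list u Y \<le> length u"
    by (rule count_le_length)
  ultimately show ?case
    using x_runs_not_Nil[of u] by (cases a) (auto split: list.split simp: Suc_diff_le)
qed simp

lemma wd_x_runs: "wd (x_runs u) = u"
proof (induction u)
  case (Cons a u)
  show ?case
  proof (cases a)
    case X
    obtain e es where "x_runs u = e # es"
      using x_runs_not_Nil by (cases "x_runs u") auto
    with X Cons.IH show ?thesis
      by (cases es) simp_all
  next
    case Y
    with Cons.IH x_runs_not_Nil[of u] show ?thesis
      by (cases "x_runs u") simp_all
  qed
qed simp

lemma x_runs_replicate_append:
  "x_runs v = e # es \<Longrightarrow> x_runs (replicate a X @ v) = (e + a) # es"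
  by (induction a) simp_all

lemma x_runs_wd: "e \<noteq> [] \<Longrightarrow> x_runs (wd e) = e"
proof (induction e rule: wd.induct)
  case (2 e)
  then show ?case
    using x_runs_replicate_append[of "[]" 0 "[]" e] by simp
qed (simp_all add: x_runs_replicate_append)

lemma word_monom_wd: "e \<noteq> [] \<Longrightarrow> word_monom (wd e) z = (\<Prod>j<length e. z j ^ (e ! j))"
proof (induction e arbitrary: z rule: wd.induct)
  case (2 e)
  then show ?case
    by (simp add: word_monom_replicate_X)
next
  case (3 e v va)
  have "word_monom (wd (e # v # va)) z = z 0 ^ e * word_monom (wd (v # va)) (\<lambda>j. z (Suc j))"
    by (simp add: word_monom_append word_monom_replicate_X)
  also have "\<dots> = z 0 ^ e * (\<Prod>j<length (v # va). z (Suc j) ^ ((v # va) ! j))"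
    using 3 by simp
  also have "\<dots> = (\<Prod>j<length (e # v # va). z j ^ ((e # v # va) ! j))"
    by (simp only: length_Cons prod.lessThan_Suc_shift) simp
  finally show ?case .
qed simp

definition partial_sum :: "nat \<Rightarrow> mpoly" where
  "partial_sum j = (\<Sum>i=1..j. Var i)"

lemma ma_eq_depth_poly:
  assumes "1 \<le> r" "r \<le> w"
  shows "ma w h r = depth_poly w h r partial_sum"
proof -
  let ?E = "{e. length e = r + 1 \<and> sum_list e = w - r}"
  have "ma w h r = (\<Sum>e\<in>?E. Const (h (wd e)) * (\<Prod>j\<le>r. partial_sum j ^ (e ! j)))"
    using assms by (simp add: ma_def partial_sum_def)
  also have "\<dots> = (\<Sum>u | length u = w \<and> count_list u Y = r. Const (h u) * word_monom u partial_sum)"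
  proof (rule sum.reindex_bij_witness[where i=x_runs and j=wd])
    fix u
    assume "u \<in> {u. length u = w \<and> count_list u Y = r}"
    then show "wd (x_runs u) = u" "x_runs u \<in> ?E"
      by (auto simp: wd_x_runs length_x_runs sum_list_x_runs)
  next
    fix e
    assume e: "e \<in> ?E"
    then have "e \<noteq> []"
      by auto
    then show runs: "x_runs (wd e) = e"
      by (rule x_runs_wd)
    have "count_list (wd e) Y = r"
      using length_x_runs[of "wd e"] e by (simp add: runs)
    moreover have "length (wd e) = w"
      using sum_list_x_runs[of "wd e"] count_le_length[of "wd e" Y] e assms \<open>count_list (wd e) Y = r\<close>
      by (simp add: runs, linarith)
    ultimately show "wd e \<in> {u. length u = w \<and> count_list u Y = r}"
      by simp
    show "Const (h (wd e)) * word_monom (wd e) partial_sum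
        = Const (h (wd e)) * (\<Prod>j\<le>r. partial_sum j ^ (e ! j))"
      using e \<open>e \<noteq> []\<close> by (simp add: word_monom_wd lessThan_Suc_atMost)
  qed
  also have "\<dots> = depth_poly w h r partial_sum"
    unfolding depth_poly_def by (simp add: sum.inter_filter[symmetric])
  finally show ?thesis .
qed

section \<open>Three properties of Lie polynomials\<close>

lemma sum_atMost_reflect: "(\<Sum>i\<le>n. g (n - i)) = (\<Sum>i\<le>(n::nat). g i)"
  using sum.atLeastAtMost_rev[of g 0 n] by (simp add: atMost_atLeast0)

lemma amul_rev:
  assumes p: "\<And>u. p (rev u) = (-1) ^ Suc (length u) * p u"
    and q: "\<And>u. q (rev u) = (-1) ^ Suc (length u) * q u"
  shows "amul p q (rev u) = (-1) ^ length u * amul q p u"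
proof -
  let ?n = "length u"
  have "amul p q (rev u) = (\<Sum>i\<le>?n. p (rev (drop (?n - i) u)) * q (rev (take (?n - i) u)))"
    by (simp add: amul_def take_rev drop_rev)
  also have "\<dots> = (\<Sum>i\<le>?n. (-1) ^ ?n * (q (take (?n - i) u) * p (drop (?n - i) u)))"
  proof (intro sum.cong refl)
    fix i
    assume "i \<in> {..?n}"
    then have "(-1::rat) ^ Suc i * (-1) ^ Suc (?n - i) = (-1) ^ (?n + 2)"
      unfolding power_add[symmetric] by simp
    then show "p (rev (drop (?n - i) u)) * q (rev (take (?n - i) u))
        = (-1) ^ ?n * (q (take (?n - i) u) * p (drop (?n - i) u))"
      using \<open>i \<in> {..?n}\<close> by (simp add: p q algebra_simps)
  qed
  also have "\<dots> = (\<Sum>i\<le>?n. (-1) ^ ?n * (q (take i u) * p (drop i u)))"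
    by (rule sum_atMost_reflect[where g="\<lambda>i. (-1) ^ ?n * (q (take i u) * p (drop i u))"])
  also have "\<dots> = (-1) ^ ?n * amul q p u"
    by (simp add: amul_def sum_distrib_left)
  finally show ?thesis .
qed

lemma lie_polys_rev: "p \<in> lie_polys \<Longrightarrow> p (rev u) = (-1) ^ Suc (length u) * p u"
proof (induction p arbitrary: u rule: lie_polys.induct)
  case (gen a)
  then show ?case
    by (cases "u = [a]") (auto simp: lt_def)
next
  case (brk p q)
  then show ?case
    using amul_rev[of p q u] amul_rev[of q p u] by (simp add: bracket_def algebra_simps)
qed (simp_all add: algebra_simps)

lemma bracket_replicate_X: "bracket p q (replicate n X) = 0"
proof -
  have "amul p q (replicate n X) = (\<Sum>i\<le>n. p (replicate i X) * q (replicate (n - i) X))"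
    unfolding amul_def by (intro sum.cong refl) (auto simp: take_replicate drop_replicate min_def)
  also have "\<dots> = (\<Sum>i\<le>n. p (replicate (n - i) X) * q (replicate (n - (n - i)) X))"
    by (rule sum_atMost_reflect[symmetric])
  also have "\<dots> = amul q p (replicate n X)"
    unfolding amul_def by (intro sum.cong refl) (auto simp: take_replicate drop_replicate min_def mult.commute)
  finally show ?thesis
    by (simp add: bracket_def)
qed

lemma lie_polys_replicate_X: "p \<in> lie_polys \<Longrightarrow> 2 \<le> n \<Longrightarrow> p (replicate n X) = 0"
proof (induction p rule: lie_polys.induct)
  case (gen a)
  then have "replicate n X \<noteq> [a]"
    by (metis One_nat_def length_Cons length_replicate list.size(3) numeral_le_one_iff semiring_norm(69))
  then show ?case
    by (simp add: lt_def)
qed (simp_all add: bracket_replicate_X)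

definition deg1_depth0 :: "mpoly \<Rightarrow> nat \<Rightarrow> nat \<Rightarrow> mpoly" where
  "deg1_depth0 c n r = (if n = 1 \<and> r = 0 then c else 0)"

lemma sum_deg1_depth0_left:
  "(\<Sum>i\<le>n. \<Sum>s\<le>r. deg1_depth0 c i s * F i s) = (if 1 \<le> n then c * F 1 0 else 0)"
proof -
  have "(\<Sum>s\<le>r. deg1_depth0 c i s * F i s) = (if i = 1 then c * F 1 0 else 0)" for i
  proof (cases "i = 1")
    case True
    then have "(\<Sum>s\<le>r. deg1_depth0 c i s * F i s) = (\<Sum>s\<le>r. if s = 0 then c * F 1 s else 0)"
      by (intro sum.cong) (auto simp: deg1_depth0_def)
    with True show ?thesis
      by simp
  qed (simp add: deg1_depth0_def)
  then show ?thesis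
    by simp
qed

lemma sum_deg1_depth0_right:
  "(\<Sum>i\<le>n. \<Sum>s\<le>r. F i s * deg1_depth0 c (n - i) (r - s)) = (if 1 \<le> n then F (n - 1) r * c else 0)"
proof -
  have "(\<Sum>s\<le>r. F i s * deg1_depth0 c (n - i) (r - s))
      = (if i = n - 1 then (if 1 \<le> n then F (n - 1) r * c else 0) else 0)"
    if "i \<le> n" for i
  proof (cases "i = n - 1 \<and> 1 \<le> n")
    case True
    then have "(\<Sum>s\<le>r. F i s * deg1_depth0 c (n - i) (r - s)) = (\<Sum>s\<le>r. if s = r then F i s * c else 0)"
      by (intro sum.cong) (auto simp: deg1_depth0_def)
    with True show ?thesis
      by simp
  next
    case False
    with that have "n - i \<noteq> 1"
      by auto
    with False show ?thesis
      by (simp add: deg1_depth0_def)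
  qed
  then have "(\<Sum>i\<le>n. \<Sum>s\<le>r. F i s * deg1_depth0 c (n - i) (r - s))
      = (\<Sum>i\<le>n. if i = n - 1 then (if 1 \<le> n then F (n - 1) r * c else 0) else 0)"
    by (intro sum.cong) auto
  then show ?thesis
    by simp
qed

lemma depth_poly_amul_translate:
  assumes p: "\<And>n r z. depth_poly n p r (\<lambda>j. z j + t) = depth_poly n p r z + deg1_depth0 cp n r"
    and q: "\<And>n r z. depth_poly n q r (\<lambda>j. z j + t) = depth_poly n q r z + deg1_depth0 cq n r"
  shows "depth_poly n (amul p q) r (\<lambda>j. z j + t) = depth_poly n (amul p q) r z
    + (if 1 \<le> n then cp * depth_poly (n - 1) q r z + depth_poly (n - 1) p r z * cq else 0)
    + (if n = 2 \<and> r = 0 then cp * cq else 0)"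
proof -
  define P where "P i s = depth_poly i p s z" for i s
  define Q where "Q i s = depth_poly (n - i) q (r - s) (\<lambda>j. z (j + s))" for i s
  have "depth_poly n (amul p q) r (\<lambda>j. z j + t)
      = (\<Sum>i\<le>n. \<Sum>s\<le>r. (P i s + deg1_depth0 cp i s) * (Q i s + deg1_depth0 cq (n - i) (r - s)))"
    unfolding depth_poly_amul P_def Q_def by (simp add: p q)
  also have "\<dots> = (\<Sum>i\<le>n. \<Sum>s\<le>r. P i s * Q i s)
      + (\<Sum>i\<le>n. \<Sum>s\<le>r. deg1_depth0 cp i s * Q i s)
      + (\<Sum>i\<le>n. \<Sum>s\<le>r. P i s * deg1_depth0 cq (n - i) (r - s))
      + (\<Sum>i\<le>n. \<Sum>s\<le>r. deg1_depth0 cp i s * deg1_depth0 cq (n - i) (r - s))"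
    by (simp add: algebra_simps sum.distrib)
  also have "(\<Sum>i\<le>n. \<Sum>s\<le>r. deg1_depth0 cp i s * deg1_depth0 cq (n - i) (r - s))
      = (if n = 2 \<and> r = 0 then cp * cq else 0)"
    unfolding sum_deg1_depth0_left by (auto simp: deg1_depth0_def)
  finally show ?thesis
    unfolding sum_deg1_depth0_left sum_deg1_depth0_right
    by (simp add: depth_poly_amul P_def Q_def)
qed

lemma depth_poly_lt:
  "depth_poly n (lt a) r z = (if n = 1 \<and> count_list [a] Y = r then word_monom [a] z else 0)"
proof -
  have "depth_poly n (lt a) r z
      = (\<Sum>u | length u = n. if u = [a] then (if count_list [a] Y = r then word_monom [a] z else 0) else 0)"
    unfolding depth_poly_def by (intro sum.cong refl) (auto simp: lt_def)
  then show ?thesis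
    by (subst (asm) sum.delta) auto
qed

text \<open>A common shift of all evaluation points changes a Lie polynomial only through its
  coefficient of \<open>x\<close>: in a bracket the cross terms of the two products cancel.\<close>

lemma depth_poly_translate_lie:
  "p \<in> lie_polys \<Longrightarrow>
    depth_poly n p r (\<lambda>j. z j + t) = depth_poly n p r z + deg1_depth0 (Const (p [X]) * t) n r"
proof (induction p arbitrary: n r z rule: lie_polys.induct)
  case (gen a)
  have "lt X [X] = 1" "lt Y [X] = 0"
    by (simp_all add: lt_def)
  then show ?case
    by (cases a) (auto simp: depth_poly_lt deg1_depth0_def)
next
  case (add p q)
  then show ?case
    by (simp add: depth_poly_add deg1_depth0_def Const_add algebra_simps)
next
  case (smult p c)
  then show ?case
    by (simp add: depth_poly_smult deg1_depth0_def Const_mult algebra_simps)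
next
  case (brk p q)
  have "bracket p q [X] = 0"
    by (simp add: bracket_def amul_def)
  then show ?case
    unfolding bracket_def depth_poly_diff
      depth_poly_amul_translate[OF brk.IH] depth_poly_amul_translate[OF brk.IH(2,1)]
    by (simp add: deg1_depth0_def algebra_simps)
qed

lemma depth_poly_shift_lie:
  assumes "p \<in> lie_polys" "n \<noteq> 1"
  shows "depth_poly n p r (\<lambda>j. z j - c) = depth_poly n p r z"
  using depth_poly_translate_lie[OF assms(1), of n r z "- c"] assms(2)
  by (simp add: deg1_depth0_def)

section \<open>The operators teru, mantar and push on partial sums\<close>

lemma partial_sum_0 [simp]: "partial_sum 0 = 0"
  by (simp add: partial_sum_def)

lemma partial_sum_Suc: "partial_sum (Suc j) = partial_sum j + Var (Suc j)"
  by (simp add: partial_sum_def)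

lemma subst_partial_sum_mantar:
  assumes "j \<le> r"
  shows "subst (\<lambda>i. Var (Suc r - i)) (partial_sum j) = partial_sum r - partial_sum (r - j)"
  using assms
proof (induction j)
  case (Suc j)
  then have "partial_sum (r - j) = partial_sum (r - Suc j) + Var (r - j)"
    by (metis Suc_diff_Suc Suc_le_lessD partial_sum_Suc)
  with Suc show ?case
    by (simp add: partial_sum_Suc subst_add Suc_diff_le)
qed simp

lemma subst_partial_sum_push:
  assumes "1 \<le> k"
  shows "subst (\<lambda>i. if i = 1 then - (\<Sum>j=1..r. Var j) else Var (i - 1)) (partial_sum k)
    = partial_sum (k - 1) - partial_sum r"
proof -
  have "subst (\<lambda>i. if i = 1 then - (\<Sum>j=1..r. Var j) else Var (i - 1)) (partial_sum (Suc k))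
      = partial_sum k - partial_sum r" for k
    by (induction k) (simp_all add: partial_sum_Suc subst_add, simp add: partial_sum_def)
  from this[of "k - 1"] assms show ?thesis
    by simp
qed

lemma subst_partial_sum_teru:
  assumes "2 \<le> m" "j \<le> m - 1"
  shows "subst (\<lambda>i. if i = m - 1 then Var (m - 1) + Var m else Var i) (partial_sum j)
    = (if j = m - 1 then partial_sum m else partial_sum j)"
proof -
  let ?\<sigma> = "\<lambda>i. if i = m - 1 then Var (m - 1) + Var m else Var i"
  have below: "subst ?\<sigma> (partial_sum j) = partial_sum j" if "j < m - 1" for j
    unfolding partial_sum_def subst_sum using that by (intro sum.cong) auto
  obtain k where m: "m = Suc (Suc k)"
    using assms(1) by (metis add_2_eq_Suc le_Suc_ex)
  have "subst ?\<sigma> (partial_sum (m - 1)) = partial_sum m"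
    using below[of k] by (simp add: m partial_sum_Suc subst_add add.assoc)
  with below assms(2) show ?thesis
    by (cases "j = m - 1") simp_all
qed

definition centred_partial_sum :: "nat \<Rightarrow> nat \<Rightarrow> mpoly" where
  "centred_partial_sum r = (\<lambda>j. partial_sum j - partial_sum r)"

lemma amul_lt_snoc: "amul p (lt a) (v @ [b]) = (if b = a then p v else 0)"
proof -
  have "p (take i (v @ [b])) * lt a (drop i (v @ [b]))
      = (if i = length v then (if b = a then p v else 0) else 0)" if "i \<le> Suc (length v)" for i
  proof (cases "i = length v")
    case False
    with that have "length (drop i (v @ [b])) \<noteq> length [a]"
      by simp
    then have "drop i (v @ [b]) \<noteq> [a]"
      by metis
    with False show ?thesis
      by (simp add: lt_def)
  qed (simp add: lt_def)
  then show ?thesis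
    by (simp add: amul_def)
qed

lemma depth_poly_neg_reflect:
  "depth_poly n p r (\<lambda>j. - z (r - j)) = (-1) ^ (n - r) * depth_poly n (\<lambda>u. p (rev u)) r z"
  using depth_poly_scale[of n p r "-1" "\<lambda>j. z (r - j)"] by (simp add: depth_poly_reflect)

context
  fixes w n :: nat and f fx fy :: alg
  assumes w_eq: "w = Suc n" and n_pos: "1 \<le> n"
    and f_lie: "f \<in> lie_polys"
    and f_snoc_X: "\<And>v. f (v @ [X]) = fx v"
    and f_snoc_Y: "\<And>v. f (v @ [Y]) = fy v"
begin

lemma depth_poly_decompose:
  "depth_poly w f r z = depth_poly n fx r z * z r + (if r = 0 then 0 else depth_poly n fy (r - 1) z)"
  unfolding w_eq depth_poly_snoc f_snoc_X f_snoc_Y by simp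

lemma depth_poly_shift_f: "depth_poly w f r (\<lambda>j. z j - c) = depth_poly w f r z"
  using f_lie w_eq n_pos by (intro depth_poly_shift_lie) auto

text \<open>Shifting all partial sums by \<open>z\<^sub>r\<close> kills the \<open>f\<^sub>x\<close>-part, which carries the factor \<open>z\<^sub>r\<close>.\<close>

lemma ma_eq_depth_poly_fy:
  assumes "1 \<le> r" "r \<le> w"
  shows "ma w f r = depth_poly n fy (r - 1) (centred_partial_sum r)"
proof -
  have "ma w f r = depth_poly w f r (\<lambda>j. partial_sum j - partial_sum r)"
    using assms by (simp add: ma_eq_depth_poly depth_poly_shift_f)
  also have "\<dots> = depth_poly n fy (r - 1) (centred_partial_sum r)"
    unfolding depth_poly_decompose using assms by (simp add: centred_partial_sum_def)
  finally show ?thesis .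
qed

lemma fx_replicate_X: "fx (replicate n X) = 0"
  using f_snoc_X[of "replicate n X"] lie_polys_replicate_X[OF f_lie, of "Suc n"] n_pos
  by (simp add: replicate_append_same)

lemma teru_ma:
  assumes r: "1 \<le> r" "r \<le> w"
  shows "teru (ma w f) r = depth_poly n (\<lambda>u. fy u + fx u) (r - 1) (centred_partial_sum r)"
proof (cases "r = 1")
  case True
  then show ?thesis
    using ma_eq_depth_poly_fy[OF r]
    by (simp add: teru_def depth_poly_add depth_poly_depth_0 fx_replicate_X)
next
  case False
  with r have r2: "2 \<le> r"
    by simp
  define \<sigma> where "\<sigma> = (\<lambda>i. if i = r - 1 then Var (r - 1) + Var r else Var i)"
  define c where "c = centred_partial_sum r"
  have c_last: "c (r - 1) = - Var r"
    using partial_sum_Suc[of "r - 1"] r2 by (simp add: c_def centred_partial_sum_def)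
  have ma_prev: "ma w f (r - 1) = depth_poly w f (r - 1) partial_sum"
    using r r2 by (intro ma_eq_depth_poly) auto
  then have prev: "ma w f (r - 1) = depth_poly w f (r - 1) c"
    by (simp add: c_def centred_partial_sum_def depth_poly_shift_f)
  have "subst \<sigma> (ma w f (r - 1))
      = depth_poly w f (r - 1) (\<lambda>j. if j = r - 1 then partial_sum r else partial_sum j)"
    unfolding ma_prev depth_poly_subst \<sigma>_def
    by (intro depth_poly_cong subst_partial_sum_teru) (use r2 in auto)
  also have "\<dots> = depth_poly w f (r - 1)
      (\<lambda>j. (if j = r - 1 then partial_sum r else partial_sum j) - partial_sum r)"
    by (rule depth_poly_shift_f[symmetric])
  also have "\<dots> = depth_poly w f (r - 1) (\<lambda>j. if j = r - 1 then 0 else c j)"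
    by (intro depth_poly_cong) (simp add: c_def centred_partial_sum_def)
  also have "\<dots> = depth_poly n fy (r - 1 - 1) c"
    unfolding depth_poly_decompose using r2 by (auto intro!: depth_poly_cong)
  finally have "subst \<sigma> (ma w f (r - 1)) = depth_poly n fy (r - 1 - 1) c" .
  moreover have "ma w f (r - 1) = depth_poly n fx (r - 1) c * - Var r + depth_poly n fy (r - 1 - 1) c"
    unfolding prev depth_poly_decompose using r2 c_last by simp
  ultimately have "subst \<sigma> (ma w f (r - 1)) - ma w f (r - 1) = Var r * depth_poly n fx (r - 1) c"
    by (simp add: algebra_simps)
  then have "teru (ma w f) r = ma w f r + depth_poly n fx (r - 1) c"
    using r2 by (simp add: teru_def \<sigma>_def div_var_Var_mult)
  then show ?thesis
    using ma_eq_depth_poly_fy[OF r] by (simp add: depth_poly_add c_def)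
qed

lemma mantar_ma:
  assumes r: "1 \<le> r" "r \<le> w"
  shows "mantar (ma w f) r = ma w f r"
proof -
  have ma_r: "ma w f r = depth_poly w f r partial_sum"
    using r by (rule ma_eq_depth_poly)
  have "subst (\<lambda>i. Var (Suc r - i)) (ma w f r)
      = depth_poly w f r (\<lambda>j. partial_sum r - partial_sum (r - j))"
    unfolding ma_r depth_poly_subst by (intro depth_poly_cong subst_partial_sum_mantar)
  also have "\<dots> = depth_poly w f r (\<lambda>j. (partial_sum r - partial_sum (r - j)) - partial_sum r)"
    by (rule depth_poly_shift_f[symmetric])
  also have "\<dots> = (-1) ^ (w - r) * depth_poly w (\<lambda>u. f (rev u)) r partial_sum"
    using depth_poly_neg_reflect[of w f r partial_sum] by simp
  also have "depth_poly w (\<lambda>u. f (rev u)) r partial_sum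
      = depth_poly w (\<lambda>u. (-1) ^ Suc w * f u) r partial_sum"
    by (rule depth_poly_cong_coeffs) (simp add: lie_polys_rev[OF f_lie])
  also have "\<dots> = (-1) ^ Suc w * ma w f r"
    unfolding ma_r depth_poly_smult Const_neg1_power ..
  finally have "mantar (ma w f) r = (-1) ^ (r - 1) * ((-1) ^ (w - r) * ((-1) ^ Suc w * ma w f r))"
    using r by (simp add: mantar_def)
  also have "\<dots> = (-1) ^ (r - 1 + (w - r) + Suc w) * ma w f r"
    by (simp only: power_add mult.assoc)
  also have "r - 1 + (w - r) + Suc w = 2 * w"
    using r by simp
  finally show ?thesis
    by simp
qed

lemma teru_mantar_ma:
  assumes "1 \<le> r" "r \<le> w"
  shows "teru (mantar (ma w f)) r = teru (ma w f) r"
proof (cases "r = 1")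
  case True
  then show ?thesis
    using mantar_ma[OF assms] by (simp add: teru_def)
next
  case False
  then show ?thesis
    using assms mantar_ma[of r] mantar_ma[of "r - 1"] by (simp add: teru_def)
qed

lemma push_mantar_teru_mantar_ma:
  assumes r: "1 \<le> r" "r \<le> w"
  shows "push (mantar (teru (mantar (ma w f)))) r
    = (-1) ^ n * depth_poly n (\<lambda>u. fy (rev u) + fx (rev u)) (r - 1) (centred_partial_sum r)"
proof -
  define g where "g u = fy u + fx u" for u
  define \<pi> where "\<pi> i = (if i = 1 then - (\<Sum>j=1..r. Var j) else Var (i - 1))" for i
  have "subst (\<lambda>i. Var (Suc r - i)) (teru (mantar (ma w f)) r)
      = depth_poly n g (r - 1) (\<lambda>j. - partial_sum (r - j))"
    unfolding teru_mantar_ma[OF r] teru_ma[OF r] depth_poly_subst centred_partial_sum_def g_def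
    by (intro depth_poly_cong) (simp add: subst_diff subst_partial_sum_mantar)
  then have "mantar (teru (mantar (ma w f))) r
      = (-1) ^ (r - 1) * depth_poly n g (r - 1) (\<lambda>j. - partial_sum (r - j))"
    using r by (simp add: mantar_def)
  then have "push (mantar (teru (mantar (ma w f)))) r
      = (-1) ^ (r - 1) * depth_poly n g (r - 1) (\<lambda>j. subst \<pi> (- partial_sum (r - j)))"
    using r by (simp add: push_def \<pi>_def[abs_def] subst_mult subst_neg1_power depth_poly_subst)
  also have "\<dots> = (-1) ^ (r - 1) * depth_poly n g (r - 1) (\<lambda>j. - centred_partial_sum r (r - 1 - j))"
  proof (intro arg_cong2[where f=times] refl depth_poly_cong)
    fix j
    assume "j \<le> r - 1"
    then have "subst \<pi> (partial_sum (r - j)) = partial_sum (r - j - 1) - partial_sum r"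
      unfolding \<pi>_def using r by (intro subst_partial_sum_push) simp
    then show "subst \<pi> (- partial_sum (r - j)) = - centred_partial_sum r (r - 1 - j)"
      by (simp add: subst_uminus centred_partial_sum_def)
  qed
  also have "\<dots> = (-1) ^ (r - 1 + (n - (r - 1))) * depth_poly n (\<lambda>u. g (rev u)) (r - 1) (centred_partial_sum r)"
    unfolding depth_poly_neg_reflect[of n g "r - 1" "centred_partial_sum r"] by (simp only: power_add mult.assoc)
  also have "r - 1 + (n - (r - 1)) = n"
    using r w_eq by simp
  finally show ?thesis
    by (simp add: g_def)
qed

lemma senary_relation_iff:
  assumes "1 \<le> r" "r \<le> w"
  shows "teru (ma w f) r = push (mantar (teru (mantar (ma w f)))) r
    \<longleftrightarrow> depth_poly n (\<lambda>u. (fy u + fx u) - (-1) ^ n * (fy (rev u) + fx (rev u))) (r - 1)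
          (centred_partial_sum r) = 0"
  unfolding teru_ma[OF assms] push_mantar_teru_mantar_ma[OF assms] depth_poly_diff depth_poly_smult
    Const_neg1_power
  by simp

end

section \<open>Reading off coefficients\<close>

fun word_exponents :: "nat \<Rightarrow> letter list \<Rightarrow> nat \<Rightarrow>\<^sub>0 nat" where
  "word_exponents s [] = 0"
| "word_exponents s (X # u) = Poly_Mapping.single s 1 + word_exponents s u"
| "word_exponents s (Y # u) = word_exponents (Suc s) u"

lemma word_monom_Var: "word_monom u (\<lambda>j. Var (j + s)) = Poly_Mapping.single (word_exponents s u) 1"
proof (induction u arbitrary: s)
  case (Cons a u)
  then show ?case
    using Cons.IH[of "Suc s"] by (cases a) (simp_all add: Var_def mult_single)
qed simp

lemma lookup_word_exponents_below: "i < s \<Longrightarrow> Poly_Mapping.lookup (word_exponents s u) i = 0"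
  by (induction s u rule: word_exponents.induct) (simp_all add: lookup_add lookup_single)

lemma lookup_word_exponents_Cons:
  "Poly_Mapping.lookup (word_exponents s (a # u)) s = 0 \<longleftrightarrow> a = Y"
  by (cases a) (simp_all add: lookup_add lookup_word_exponents_below)

lemma word_exponents_inj:
  assumes "word_exponents s u = word_exponents s v" "count_list u Y = count_list v Y"
  shows "u = v"
  using assms
proof (induction u arbitrary: s v)
  case Nil
  show ?case
  proof (cases v)
    case (Cons b v')
    with Nil.prems(1) have "b = Y"
      using lookup_word_exponents_Cons[of s b v'] by simp
    with Cons Nil.prems(2) show ?thesis
      by simp
  qed simp
next
  case (Cons a u)
  show ?case
  proof (cases v)
    case Nil
    with Cons.prems(1) have "a = Y"
      using lookup_word_exponents_Cons[of s a u] by simp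
    with Nil Cons.prems(2) show ?thesis
      by simp
  next
    case (Cons b v')
    with Cons.prems(1) have "a = Y \<longleftrightarrow> b = Y"
      using lookup_word_exponents_Cons[of s a u] lookup_word_exponents_Cons[of s b v'] by simp
    then have "a = b"
      by (metis letter.exhaust)
    with Cons Cons.prems Cons.IH show ?thesis
      by (cases a) auto
  qed
qed

lemma depth_poly_Var_eq_0D:
  assumes "depth_poly n h d Var = 0" "length u = n" "count_list u Y = d"
  shows "h u = 0"
proof -
  have monom: "word_monom v Var = Poly_Mapping.single (word_exponents 0 v) 1" for v
    using word_monom_Var[of v 0] by (simp add: eta_contract_eq)
  have "Poly_Mapping.lookup (depth_poly n h d Var) (word_exponents 0 u)
      = (\<Sum>v | length v = n. if v = u then h u else 0)"
    unfolding depth_poly_def lookup_sum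
  proof (intro sum.cong refl)
    fix v
    have "Poly_Mapping.lookup (if count_list v Y = d then Const (h v) * word_monom v Var else 0)
        (word_exponents 0 u) = (if count_list v Y = d \<and> word_exponents 0 v = word_exponents 0 u then h v else 0)"
      by (simp add: monom Const_def mult_single lookup_single when_def)
    also have "\<dots> = (if v = u then h u else 0)"
      using word_exponents_inj[of 0 v u] assms(3) by auto
    finally show "Poly_Mapping.lookup (if count_list v Y = d then Const (h v) * word_monom v Var else 0)
        (word_exponents 0 u) = (if v = u then h u else 0)" .
  qed
  also have "\<dots> = h u"
    using assms(2) by simp
  finally show ?thesis
    using assms(1) by simp
qed

text \<open>The substitution \<open>x\<^sub>i \<mapsto> v\<^sub>i - v\<^sub>i\<^sub>-\<^sub>1\<close>, with \<open>v\<^sub>k = x\<^sub>k\<close> for \<open>k \<le> d\<close> and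
  \<open>v\<^sub>k = 0\<close> beyond, turns the centred partial sums into independent variables.\<close>

lemma depth_poly_centred_eq_0D:
  assumes "depth_poly n h d (centred_partial_sum (Suc d)) = 0" "length u = n" "count_list u Y = d"
  shows "h u = 0"
proof (rule depth_poly_Var_eq_0D[OF _ assms(2,3)])
  define v where "v k = (if k \<le> d then Var k else 0)" for k
  define \<sigma> where "\<sigma> i = v i - v (i - 1)" for i
  have telescope: "subst \<sigma> (partial_sum j) = v j - v 0" for j
    by (induction j) (simp_all add: partial_sum_Suc subst_add \<sigma>_def)
  have "depth_poly n h d Var = depth_poly n h d (\<lambda>j. subst \<sigma> (centred_partial_sum (Suc d) j))"
    by (intro depth_poly_cong) (simp add: centred_partial_sum_def subst_diff telescope v_def)
  also have "\<dots> = 0"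
    using arg_cong[OF assms(1), of "subst \<sigma>"] by (simp add: depth_poly_subst)
  finally show "depth_poly n h d Var = 0" .
qed

lemma depth_polys_centred_eq_0_iff:
  "(\<forall>r. 1 \<le> r \<and> r \<le> Suc n \<longrightarrow> depth_poly n h (r - 1) (centred_partial_sum r) = 0)
    \<longleftrightarrow> (\<forall>u. length u = n \<longrightarrow> h u = 0)"
proof (intro iffI allI impI)
  fix u :: "letter list"
  assume "\<forall>r. 1 \<le> r \<and> r \<le> Suc n \<longrightarrow> depth_poly n h (r - 1) (centred_partial_sum r) = 0"
    and "length u = n"
  moreover have "count_list u Y \<le> n"
    using count_le_length[of u Y] \<open>length u = n\<close> by simp
  ultimately show "h u = 0"
    by (intro depth_poly_centred_eq_0D[of n h "count_list u Y"]) auto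
next
  fix r
  assume "\<forall>u. length u = n \<longrightarrow> h u = 0"
  then show "depth_poly n h (r - 1) (centred_partial_sum r) = 0"
    using depth_poly_cong_coeffs[of n h "\<lambda>u. 0"] by simp
qed

theorem lemma3p2:
  fixes w :: nat and f fx fy :: alg
  assumes "w > 2"
    and "f \<in> L w"
    and "homog (w - 1) fx" and "homog (w - 1) fy"
    and "f = (\<lambda>u. amul fx (lt X) u + amul fy (lt Y) u)"
  defines "g \<equiv> (\<lambda>u. fy u + fx u)"
  shows "(g = (\<lambda>u. (-1) ^ (w - 1) * anti g u))
     \<longleftrightarrow> (\<forall>r. 1 \<le> r \<and> r \<le> w \<longrightarrow>
            teru (ma w f) r = push (mantar (teru (mantar (ma w f)))) r)"
proof -
  define n where "n = w - 1"
  have w_eq: "w = Suc n" and n_pos: "1 \<le> n"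
    using assms(1) by (auto simp: n_def)
  have f_lie: "f \<in> lie_polys"
    using assms(2) by (simp add: L_def)
  have f_snoc: "f (v @ [X]) = fx v" "f (v @ [Y]) = fy v" for v
    using assms(5) by (simp_all add: amul_lt_snoc)
  have g_outside: "g u = 0" if "length u \<noteq> n" for u
    using assms(3,4) that by (simp add: g_def homog_def n_def)
  have "g = (\<lambda>u. (-1) ^ (w - 1) * anti g u) \<longleftrightarrow> (\<forall>u. g u - (-1) ^ n * g (rev u) = 0)"
    by (simp add: fun_eq_iff anti_def n_def)
  also have "\<dots> \<longleftrightarrow> (\<forall>u. length u = n \<longrightarrow> g u - (-1) ^ n * g (rev u) = 0)"
    using g_outside by (metis length_rev diff_self mult_zero_right)
  also have "\<dots> \<longleftrightarrow> (\<forall>r. 1 \<le> r \<and> r \<le> w \<longrightarrow>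
      depth_poly n (\<lambda>u. g u - (-1) ^ n * g (rev u)) (r - 1) (centred_partial_sum r) = 0)"
    unfolding w_eq by (rule depth_polys_centred_eq_0_iff[symmetric])
  also have "\<dots> \<longleftrightarrow> (\<forall>r. 1 \<le> r \<and> r \<le> w \<longrightarrow>
      teru (ma w f) r = push (mantar (teru (mantar (ma w f)))) r)"
    using senary_relation_iff[OF w_eq n_pos f_lie f_snoc] by (simp add: g_def)
  finally show ?thesis .
qed

end
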